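(* Let $G=(V,E)$ be a finite simple connected graph and $t\ge0$. Then $\bigcap_{v\in V}\Omega^\infty_v=\varnothing$, where $\Omega^\infty_v=\{(\varphi,C)\in\Omega^{(t)}_{\mathrm{all}}:\mathrm{ecc}(v,\varphi,C)=\infty\}$.
   Context: $N(v)$ is the neighbourhood of $v$. Synchronous rounds; each node sends a message to every neighbour in each round. Failure patterns. A failure pattern is a set $\varphi=\{(v,F_v,f_v): v\in F\}$ with $F\subseteq V$, $|F|\le t$, integers $f_v\ge1$ and nonempty $F_v\subseteq N(v)$: $v$ acts normally in rounds $<f_v$, in round $f_v$ its messages reach exactly $N(v)\setminus F_v$, afterwards it sends nothing. Nodes in $F$ are faulty, others correct. $\Phi^{(t)}_{\mathrm{all}}$ is the set of failure patterns with at most $t$ faulty nodes; $\mathrm{comp}(G,\varphi)$ is the set of (nonempty) connected components of the subgraph of $G$ induced by the correct nodes of $\varphi$; $\Omega^{(t)}_{\mathrm{all}}=\{(\varphi,C):\varphi\in\Phi^{(t)}_{\mathrm{all}},\ C\in\mathrm{comp}(G,\varphi)\}$. Causal paths. A causal path w.r.t. $\varphi$ from $v$ to $v'$ is $u_1=v,\dots,u_q=v'$ with $u_{i+1}\in N(u_i)$, $u_i$ not crashed during rounds $1,\dots,i-1$, and $u_{i+1}\notin F_{u_i}$ if $u_i$ crashes at round $i$; length $q-1$. Eccentricity in a component. $\mathrm{ecc}(v,\varphi,C)$ is the maximum over $w\in C$ of the minimum length of a causal path w.r.t. $\varphi$ from $v$ to $w$, and $\infty$ if some $w\in C$ has no such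 path. *)

theory Defs
  imports Main "HOL-Library.Extended_Nat"
begin

definition simple_graph :: "'a set \<Rightarrow> ('a \<Rightarrow> 'a \<Rightarrow> bool) \<Rightarrow> bool" where
  "simple_graph V E \<longleftrightarrow> finite V \<and> V \<noteq> {} \<and>
     (\<forall>u v. E u v \<longrightarrow> u \<in> V \<and> v \<in> V) \<and> (\<forall>u v. E u v \<longrightarrow> E v u) \<and> (\<forall>u. \<not> E u u)"

definition edges_on :: "'a set \<Rightarrow> ('a \<Rightarrow> 'a \<Rightarrow> bool) \<Rightarrow> ('a \<times> 'a) set" where
  "edges_on W E = {(a, b). a \<in> W \<and> b \<in> W \<and> E a b}"

definition connected_graph :: "'a set \<Rightarrow> ('a \<Rightarrow> 'a \<Rightarrow> bool) \<Rightarrow> bool" where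
  "connected_graph V E \<longleftrightarrow> (\<forall>u\<in>V. \<forall>v\<in>V. (u, v) \<in> (edges_on V E)\<^sup>*)"

definition nbhd :: "'a set \<Rightarrow> ('a \<Rightarrow> 'a \<Rightarrow> bool) \<Rightarrow> 'a \<Rightarrow> 'a set" where
  "nbhd V E v = {u \<in> V. E v u}"

type_synonym 'a failure_pattern = "('a \<times> 'a set \<times> nat) set"

definition faulty :: "'a failure_pattern \<Rightarrow> 'a set" where
  "faulty \<phi> = fst ` \<phi>"

definition is_failure_pattern ::
  "'a set \<Rightarrow> ('a \<Rightarrow> 'a \<Rightarrow> bool) \<Rightarrow> nat \<Rightarrow> 'a failure_pattern \<Rightarrow> bool" where
  "is_failure_pattern V E t \<phi> \<longleftrightarrow>
     faulty \<phi> \<subseteq> V \<and> card (faulty \<phi>) \<le> t \<and>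
     (\<forall>(v, A, k) \<in> \<phi>. \<forall>(v', A', k') \<in> \<phi>. v = v' \<longrightarrow> A = A' \<and> k = k') \<and>
     (\<forall>(v, A, k) \<in> \<phi>. 1 \<le> k \<and> A \<noteq> {} \<and> A \<subseteq> nbhd V E v)"

definition Phi_all :: "'a set \<Rightarrow> ('a \<Rightarrow> 'a \<Rightarrow> bool) \<Rightarrow> nat \<Rightarrow> 'a failure_pattern set" where
  "Phi_all V E t = {\<phi>. is_failure_pattern V E t \<phi>}"

definition comp :: "'a set \<Rightarrow> ('a \<Rightarrow> 'a \<Rightarrow> bool) \<Rightarrow> 'a failure_pattern \<Rightarrow> 'a set set" where
  "comp V E \<phi> = {C. \<exists>x \<in> V - faulty \<phi>.
      C = {y \<in> V - faulty \<phi>. (x, y) \<in> (edges_on (V - faulty \<phi>) E)\<^sup>*}}"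

definition Omega_all :: "'a set \<Rightarrow> ('a \<Rightarrow> 'a \<Rightarrow> bool) \<Rightarrow> nat \<Rightarrow> ('a failure_pattern \<times> 'a set) set" where
  "Omega_all V E t = {(\<phi>, C). \<phi> \<in> Phi_all V E t \<and> C \<in> comp V E \<phi>}"

text \<open>Causal path u_1,...,u_q given as a nonempty list (0-indexed; step j corresponds to
  round j+1). Its length is q - 1.\<close>
definition causal_path ::
  "'a set \<Rightarrow> ('a \<Rightarrow> 'a \<Rightarrow> bool) \<Rightarrow> 'a failure_pattern \<Rightarrow> 'a \<Rightarrow> 'a \<Rightarrow> 'a list \<Rightarrow> bool" where
  "causal_path V E \<phi> v v' us \<longleftrightarrow> us \<noteq> [] \<and> hd us = v \<and> last us = v' \<and>
     (\<forall>j. j + 1 < length us \<longrightarrow>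
        us ! (j + 1) \<in> nbhd V E (us ! j) \<and>
        (\<forall>(x, A, k) \<in> \<phi>. x = us ! j \<longrightarrow> j + 1 \<le> k \<and> (k = j + 1 \<longrightarrow> us ! (j + 1) \<notin> A)))"

definition ecc :: "'a set \<Rightarrow> ('a \<Rightarrow> 'a \<Rightarrow> bool) \<Rightarrow> 'a \<Rightarrow> 'a failure_pattern \<Rightarrow> 'a set \<Rightarrow> enat" where
  "ecc V E v \<phi> C = (SUP w \<in> C. INF us \<in> {us. causal_path V E \<phi> v w us}. enat (length us - 1))"

definition Omega_inf :: "'a set \<Rightarrow> ('a \<Rightarrow> 'a \<Rightarrow> bool) \<Rightarrow> nat \<Rightarrow> 'a \<Rightarrow> ('a failure_pattern \<times> 'a set) set" where
  "Omega_inf V E t v = {(\<phi>, C) \<in> Omega_all V E t. ecc V E v \<phi> C = \<infinity>}"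

end

theory Submission
  imports Defs
begin

text \<open>Every component C of correct nodes contains a node x from which all of C is reached
  by a path through correct nodes. Correct nodes never crash, so such a path is causal, and
  since C is finite the eccentricity of x in C is finite. Hence (\<phi>, C) is missing from the
  set Omega_inf of x.\<close>

lemma SUP_enat_less_infinity:
  assumes "finite A" and "\<And>x. x \<in> A \<Longrightarrow> f x < (\<infinity>::enat)"
  shows "(SUP x\<in>A. f x) < \<infinity>"
proof (cases "A = {}")
  case True
  then show ?thesis by (simp add: bot_enat_def)
next
  case False
  then have "Max (f ` A) \<in> f ` A"
    using assms(1) by (intro Max_in) auto
  then obtain y where "y \<in> A" "Max (f ` A) = f y"
    by blast
  then show ?thesis
    using assms False by (simp add: Sup_enat_def)
qed

definition walk_in :: "'a set \<Rightarrow> ('a \<Rightarrow> 'a \<Rightarrow> bool) \<Rightarrow> 'a list \<Rightarrow> bool" where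
  "walk_in W E us \<longleftrightarrow> us \<noteq> [] \<and> set us \<subseteq> W \<and>
     (\<forall>j. j + 1 < length us \<longrightarrow> E (us ! j) (us ! (j + 1)))"

lemma walk_in_snoc:
  assumes "walk_in W E us" and "E (last us) z" and "z \<in> W"
  shows "walk_in W E (us @ [z])"
  unfolding walk_in_def
proof (intro conjI allI impI)
  fix j assume j: "j + 1 < length (us @ [z])"
  show "E ((us @ [z]) ! j) ((us @ [z]) ! (j + 1))"
  proof (cases "j + 1 < length us")
    case True
    then show ?thesis using assms(1) by (simp add: walk_in_def nth_append)
  next
    case False
    with j have "j = length us - 1" by simp
    then show ?thesis
      using assms(1,2) by (simp add: walk_in_def nth_append last_conv_nth)
  qed
qed (use assms in \<open>auto simp: walk_in_def\<close>)

lemma rtrancl_edges_on_imp_walk_in: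
  assumes "(x, y) \<in> (edges_on W E)\<^sup>*" and "x \<in> W"
  shows "\<exists>us. walk_in W E us \<and> hd us = x \<and> last us = y"
  using assms(1)
proof (induction rule: rtrancl_induct)
  case base
  show ?case
    using assms(2) by (intro exI[of _ "[x]"]) (simp add: walk_in_def)
next
  case (step y z)
  then obtain us where us: "walk_in W E us" "hd us = x" "last us = y"
    by blast
  have "E y z" "z \<in> W"
    using step.hyps(2) by (auto simp: edges_on_def)
  then have "walk_in W E (us @ [z])"
    using us walk_in_snoc[of W E us z] by simp
  moreover have "hd (us @ [z]) = x"
    using us by (simp add: walk_in_def)
  ultimately show ?case
    by (metis last_snoc)
qed

text \<open>Only the crash conditions on the nodes of the path matter, and they hold vacuously
  for correct nodes.\<close>
lemma walk_in_correct_imp_causal_path: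
  assumes "walk_in (V - faulty \<phi>) E us"
  shows "causal_path V E \<phi> (hd us) (last us) us"
  unfolding causal_path_def
proof (intro conjI allI impI)
  fix j assume j: "j + 1 < length us"
  then have "us ! j \<in> set us" "us ! (j + 1) \<in> set us"
    by simp_all
  then have "us ! j \<in> V - faulty \<phi>" "us ! (j + 1) \<in> V - faulty \<phi>"
    using assms by (auto simp: walk_in_def)
  then show "us ! (j + 1) \<in> nbhd V E (us ! j)"
    using assms j by (simp add: walk_in_def nbhd_def)
  show "\<forall>(x, A, k)\<in>\<phi>. x = us ! j \<longrightarrow> j + 1 \<le> k \<and> (k = j + 1 \<longrightarrow> us ! (j + 1) \<notin> A)"
    using \<open>us ! j \<in> V - faulty \<phi>\<close> by (force simp: faulty_def)
qed (use assms in \<open>auto simp: walk_in_def\<close>)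

lemma ecc_less_infinity_if_reachable:
  assumes "finite C" and "x \<in> V - faulty \<phi>"
    and "\<And>w. w \<in> C \<Longrightarrow> (x, w) \<in> (edges_on (V - faulty \<phi>) E)\<^sup>*"
  shows "ecc V E x \<phi> C < \<infinity>"
  unfolding ecc_def
proof (rule SUP_enat_less_infinity[OF assms(1)])
  fix w assume "w \<in> C"
  then obtain us where us: "walk_in (V - faulty \<phi>) E us" "hd us = x" "last us = w"
    using rtrancl_edges_on_imp_walk_in[OF assms(3) assms(2)] by blast
  have "causal_path V E \<phi> x w us"
    using walk_in_correct_imp_causal_path[OF us(1)] us(2,3) by simp
  then have "(INF us \<in> {us. causal_path V E \<phi> x w us}. enat (length us - 1))
      \<le> enat (length us - 1)"
    by (intro INF_lower) simp
  also have "\<dots> < \<infinity>"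
    by simp
  finally show "(INF us \<in> {us. causal_path V E \<phi> x w us}. enat (length us - 1)) < \<infinity>" .
qed

lemma comp_has_node_of_finite_ecc:
  assumes "finite V" and "C \<in> comp V E \<phi>"
  shows "\<exists>x\<in>C. ecc V E x \<phi> C < \<infinity>"
proof -
  obtain x where x: "x \<in> V - faulty \<phi>"
    and C: "C = {y \<in> V - faulty \<phi>. (x, y) \<in> (edges_on (V - faulty \<phi>) E)\<^sup>*}"
    using assms(2) by (auto simp: comp_def)
  have "x \<in> C"
    using x C by simp
  moreover have "ecc V E x \<phi> C < \<infinity>"
    using assms(1) x C by (intro ecc_less_infinity_if_reachable) auto
  ultimately show ?thesis ..
qed

theorem mainTheorem11:
  fixes V :: "'a set" and E :: "'a \<Rightarrow> 'a \<Rightarrow> bool" and t :: nat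
  assumes "simple_graph V E" and "connected_graph V E"
  shows "(\<Inter>v\<in>V. Omega_inf V E t v) = {}"
proof (rule ccontr)
  assume "(\<Inter>v\<in>V. Omega_inf V E t v) \<noteq> {}"
  then obtain \<phi> C where in_all: "\<And>v. v \<in> V \<Longrightarrow> (\<phi>, C) \<in> Omega_inf V E t v"
    by (metis INT_E ex_in_conv surj_pair)
  have "finite V" "V \<noteq> {}"
    using assms(1) by (simp_all add: simple_graph_def)
  then obtain v0 where "v0 \<in> V"
    by blast
  then have "C \<in> comp V E \<phi>"
    using in_all by (simp add: Omega_inf_def Omega_all_def)
  then obtain x where "x \<in> C" "ecc V E x \<phi> C < \<infinity>"
    using comp_has_node_of_finite_ecc[OF \<open>finite V\<close>] by blast
  moreover have "x \<in> V"
    using \<open>x \<in> C\<close> \<open>C \<in> comp V E \<phi>\<close> by (auto simp: comp_def)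
  ultimately show False
    using in_all[OF \<open>x \<in> V\<close>] by (simp add: Omega_inf_def)
qed

end
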